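(* Suppose every $f_i$ is monotone and submodular. Consider a round of the while-loop of the Randomized meta-Greedy algorithm at which the current sets satisfy $|S^t_{\rm tr}|<l$ and $|S^t_i|<k-l$, and let $S^{t+1}_{\rm tr},S^{t+1}_i$ be the sets after the round. Then $$\mathbb{E}\Bigl[\sum_{i=1}^m f_i(S^{t+1}_{\rm tr}\cup S^{t+1}_i)-f_i(S^{t}_{\rm tr}\cup S^{t}_i)\,\Big|\,S^t_{\rm tr},S^t_1,\dots,S^t_m\Bigr]\;\ge\;\frac1k\Bigl(\mathrm{OPT}-\sum_{i=1}^m f_i(S^t_{\rm tr}\cup S^t_i)\Bigr).$$
   Context: $V$ is a finite ground set; $1\le l<k\le |V|$. For $i=1,\dots,m$, $f_i:2^V\to\mathbb{R}_{\ge 0}$; monotone means $A\subseteq B\Rightarrow f_i(A)\le f_i(B)$, submodular means $f_i(A)+f_i(B)\ge f_i(A\cup B)+f_i(A\cap B)$. $\mathrm{OPT}=\max_{|S_{\rm tr}|\le l}\sum_{i=1}^m\max_{|S_i|\le k-l}f_i(S_{\rm tr}\cup S_i)$ (all sets subsets of $V$). One round of the while-loop of Randomized meta-Greedy: compute $e_i^*\in\arg\max_{e\in V}[f_i(S_{\rm tr}\cup S_i\cup\{e\})-f_i(S_{\rm tr}\cup S_i)]$ for each $i$ and $e_{\rm tr}^*\in\arg\max_{e\in V}\sum_{i=1}^m[f_i(S_{\rm tr}\cup S_i\cup\{e\})-f_i(S_{\rm tr}\cup S_i)]$; then with probability $l/k$ add $e^*_{\rm tr}$ to $S_{\rm tr}$,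 and otherwise (probability $(k-l)/k$) add $e_i^*$ to $S_i$ for every $i$. *)

theory Defs
  imports "HOL-Probability.Probability"
begin

definition monotone_set_fun :: "'a set \<Rightarrow> ('a set \<Rightarrow> real) \<Rightarrow> bool" where
  "monotone_set_fun V g \<longleftrightarrow> (\<forall>A B. A \<subseteq> B \<and> B \<subseteq> V \<longrightarrow> g A \<le> g B)"

definition submodular_set_fun :: "'a set \<Rightarrow> ('a set \<Rightarrow> real) \<Rightarrow> bool" where
  "submodular_set_fun V g \<longleftrightarrow>
     (\<forall>A B. A \<subseteq> V \<and> B \<subseteq> V \<longrightarrow> g A + g B \<ge> g (A \<union> B) + g (A \<inter> B))"

definition OPT :: "'a set \<Rightarrow> nat \<Rightarrow> nat \<Rightarrow> nat \<Rightarrow> (nat \<Rightarrow> 'a set \<Rightarrow> real) \<Rightarrow> real" where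
  "OPT V l k m f =
     Max ((\<lambda>Str. \<Sum>i\<in>{1..m}. Max ((\<lambda>Si. f i (Str \<union> Si)) ` {Si. Si \<subseteq> V \<and> card Si \<le> k - l}))
          ` {Str. Str \<subseteq> V \<and> card Str \<le> l})"

text \<open>One round of Randomized meta-Greedy given the coin outcome
  (True: probability l/k, add e_tr to S_tr; False: add e_i to each S_i).\<close>
definition meta_greedy_round ::
  "'a set \<Rightarrow> (nat \<Rightarrow> 'a set) \<Rightarrow> 'a \<Rightarrow> (nat \<Rightarrow> 'a) \<Rightarrow> bool \<Rightarrow> 'a set \<times> (nat \<Rightarrow> 'a set)" where
  "meta_greedy_round Str S etr e coin =
     (if coin then (insert etr Str, S) else (Str, \<lambda>i. insert (e i) (S i)))"

end

theory Submission
  imports Defs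
begin

text \<open>Fix an optimal pair \<open>(T, U\<^sub>i)\<close>. Write \<open>A\<^sub>i = S\<^sub>t\<^sub>r \<union> S\<^sub>i\<close> and
  \<open>\<Delta>\<^sub>i(x) = f\<^sub>i(A\<^sub>i \<union> {x}) - f\<^sub>i(A\<^sub>i)\<close>. By monotonicity and submodularity,
  \<open>f\<^sub>i(T \<union> U\<^sub>i) \<le> f\<^sub>i(A\<^sub>i) + \<Sum>\<^sub>x\<^sub>\<in>\<^sub>T \<Delta>\<^sub>i(x) + \<Sum>\<^sub>x\<^sub>\<in>\<^sub>U\<^sub>i \<Delta>\<^sub>i(x)\<close>. Summing over \<open>i\<close> and bounding
  every marginal gain by the greedy one gives
  \<open>OPT - \<Sum>\<^sub>i f\<^sub>i(A\<^sub>i) \<le> l D\<^sub>t\<^sub>r + (k - l) D\<close>, where \<open>D\<^sub>t\<^sub>r\<close> and \<open>D\<close> are the gains of the two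
  possible moves of the round. The expected gain of the round is
  \<open>(l/k) D\<^sub>t\<^sub>r + ((k - l)/k) D\<close>, exactly \<open>1/k\<close> times that bound.\<close>

lemma monotone_set_funD:
  assumes "monotone_set_fun V g" "A \<subseteq> B" "B \<subseteq> V"
  shows "g A \<le> g B"
  using assms unfolding monotone_set_fun_def by simp

lemma submodular_set_funD:
  assumes "submodular_set_fun V g" "A \<subseteq> V" "B \<subseteq> V"
  shows "g (A \<union> B) + g (A \<inter> B) \<le> g A + g B"
  using assms unfolding submodular_set_fun_def by simp

lemma marginal_gain_nonneg:
  assumes "monotone_set_fun V g" "A \<subseteq> V" "x \<in> V"
  shows "0 \<le> g (A \<union> {x}) - g A"
proof -
  have "g A \<le> g (A \<union> {x})"
    by (rule monotone_set_funD[OF assms(1)]) (use assms in auto)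
  then show ?thesis by simp
qed

lemma submodular_gain_le_sum_marginal_gains:
  assumes mono: "monotone_set_fun V g" and sub: "submodular_set_fun V g"
    and A: "A \<subseteq> V" and T: "finite T" "T \<subseteq> V"
  shows "g (A \<union> T) - g A \<le> (\<Sum>x\<in>T. g (A \<union> {x}) - g A)"
  using T
proof (induction T rule: finite_induct)
  case empty
  then show ?case by simp
next
  case (insert x T)
  have x: "A \<union> {x} \<subseteq> V" and AT: "A \<union> T \<subseteq> V" using A insert.prems by auto
  have "g (A \<union> insert x T) + g ((A \<union> {x}) \<inter> (A \<union> T)) \<le> g (A \<union> {x}) + g (A \<union> T)"
    using submodular_set_funD[OF sub x AT] by (simp add: Un_left_commute Un_assoc)
  moreover have "g A \<le> g ((A \<union> {x}) \<inter> (A \<union> T))"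
    by (rule monotone_set_funD[OF mono]) (use x in auto)
  moreover have "g (A \<union> T) - g A \<le> (\<Sum>y\<in>T. g (A \<union> {y}) - g A)"
    using insert.IH insert.prems by simp
  ultimately show ?case using insert.hyps by simp
qed

lemma monotone_submodular_le_marginal_bound:
  assumes mono: "monotone_set_fun V g" and sub: "submodular_set_fun V g" and finV: "finite V"
    and A: "A \<subseteq> V" and T: "T \<subseteq> V" and U: "U \<subseteq> V"
    and c: "\<And>x. x \<in> U \<Longrightarrow> g (A \<union> {x}) - g A \<le> c"
  shows "g (T \<union> U) \<le> g A + (\<Sum>x\<in>T. g (A \<union> {x}) - g A) + real (card U) * c"
proof -
  let ?\<Delta> = "\<lambda>x. g (A \<union> {x}) - g A"
  have fin: "finite T" "finite U" using T U finV finite_subset by auto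
  have "g (T \<union> U) \<le> g (A \<union> (T \<union> U))"
    by (rule monotone_set_funD[OF mono]) (use A T U in auto)
  also have "\<dots> \<le> g A + (\<Sum>x\<in>T \<union> U. ?\<Delta> x)"
    using submodular_gain_le_sum_marginal_gains[OF mono sub A, of "T \<union> U"] fin T U by simp
  also have "(\<Sum>x\<in>T \<union> U. ?\<Delta> x) \<le> (\<Sum>x\<in>T. ?\<Delta> x) + (\<Sum>x\<in>U. ?\<Delta> x)"
  proof -
    have "0 \<le> (\<Sum>x\<in>T \<inter> U. ?\<Delta> x)"
      using marginal_gain_nonneg[OF mono A] T by (intro sum_nonneg) auto
    then show ?thesis using sum_Un[OF fin, of ?\<Delta>] by simp
  qed
  also have "(\<Sum>x\<in>U. ?\<Delta> x) \<le> real (card U) * c"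
    using sum_bounded_above[of U ?\<Delta> c] c by simp
  finally show ?thesis by simp
qed

lemma OPT_le:
  assumes finV: "finite V"
    and le_b: "\<And>T i U. T \<subseteq> V \<Longrightarrow> card T \<le> l \<Longrightarrow> i \<in> {1..m} \<Longrightarrow> U \<subseteq> V \<Longrightarrow>
                 card U \<le> k - l \<Longrightarrow> f i (T \<union> U) \<le> b i T"
    and sum_b_le: "\<And>T. T \<subseteq> V \<Longrightarrow> card T \<le> l \<Longrightarrow> (\<Sum>i\<in>{1..m}. b i T) \<le> B"
  shows "OPT V l k m f \<le> B"
proof -
  have fin: "finite {X. X \<subseteq> V \<and> card X \<le> n}" for n
    by (rule finite_subset[of _ "Pow V"]) (use finV in auto)
  have ne: "{X. X \<subseteq> V \<and> card X \<le> n} \<noteq> {}" for n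
    using empty_subsetI[of V] by (metis (mono_tags, lifting) card.empty le0 mem_Collect_eq empty_iff)
  have "(\<Sum>i\<in>{1..m}. Max ((\<lambda>U. f i (T \<union> U)) ` {U. U \<subseteq> V \<and> card U \<le> k - l})) \<le> B"
    if T: "T \<subseteq> V" "card T \<le> l" for T
  proof -
    have "(\<Sum>i\<in>{1..m}. Max ((\<lambda>U. f i (T \<union> U)) ` {U. U \<subseteq> V \<and> card U \<le> k - l}))
          \<le> (\<Sum>i\<in>{1..m}. b i T)"
      using le_b[OF T] fin ne by (intro sum_mono Max.boundedI) auto
    also have "\<dots> \<le> B" using sum_b_le[OF T] .
    finally show ?thesis .
  qed
  then show ?thesis
    unfolding OPT_def using fin ne by (intro Max.boundedI) auto
qed

lemma OPT_le_marginal_gains: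
  fixes A :: "nat \<Rightarrow> 'a set"
  assumes finV: "finite V"
    and mono: "\<And>i. i \<in> {1..m} \<Longrightarrow> monotone_set_fun V (f i)"
    and submod: "\<And>i. i \<in> {1..m} \<Longrightarrow> submodular_set_fun V (f i)"
    and A: "\<And>i. i \<in> {1..m} \<Longrightarrow> A i \<subseteq> V"
    and e_max: "\<And>i. i \<in> {1..m} \<Longrightarrow> e i \<in> V"
      "\<And>i x. i \<in> {1..m} \<Longrightarrow> x \<in> V \<Longrightarrow>
         f i (A i \<union> {x}) - f i (A i) \<le> f i (A i \<union> {e i}) - f i (A i)"
    and etr_max: "etr \<in> V"
      "\<And>x. x \<in> V \<Longrightarrow>
         (\<Sum>i\<in>{1..m}. f i (A i \<union> {x}) - f i (A i))
           \<le> (\<Sum>i\<in>{1..m}. f i (A i \<union> {etr}) - f i (A i))"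
  shows "OPT V l k m f \<le> (\<Sum>i\<in>{1..m}. f i (A i))
           + real l * (\<Sum>i\<in>{1..m}. f i (A i \<union> {etr}) - f i (A i))
           + real (k - l) * (\<Sum>i\<in>{1..m}. f i (A i \<union> {e i}) - f i (A i))"
proof -
  let ?\<Delta> = "\<lambda>i x. f i (A i \<union> {x}) - f i (A i)"
  let ?Dtr = "\<Sum>i\<in>{1..m}. ?\<Delta> i etr"
  show ?thesis
  proof (rule OPT_le[OF finV, where b = "\<lambda>i T. f i (A i) + (\<Sum>x\<in>T. ?\<Delta> i x) + real (k - l) * ?\<Delta> i (e i)"])
    fix T i U assume T: "T \<subseteq> V" and i: "i \<in> {1..m}" and U: "U \<subseteq> V" "card U \<le> k - l"
    have "real (card U) * ?\<Delta> i (e i) \<le> real (k - l) * ?\<Delta> i (e i)"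
      using U(2) marginal_gain_nonneg[OF mono[OF i] A[OF i] e_max(1)[OF i]]
      by (intro mult_right_mono) auto
    then show "f i (T \<union> U) \<le> f i (A i) + (\<Sum>x\<in>T. ?\<Delta> i x) + real (k - l) * ?\<Delta> i (e i)"
      using monotone_submodular_le_marginal_bound[OF mono[OF i] submod[OF i] finV A[OF i] T U(1)]
        e_max(2)[OF i] U(1)
      by fastforce
  next
    fix T assume T: "T \<subseteq> V" "card T \<le> l"
    have "0 \<le> ?Dtr"
      using marginal_gain_nonneg[OF mono A] etr_max(1) by (intro sum_nonneg) auto
    have "(\<Sum>x\<in>T. \<Sum>i\<in>{1..m}. ?\<Delta> i x) \<le> real (card T) * ?Dtr"
      using sum_bounded_above[of T "\<lambda>x. \<Sum>i\<in>{1..m}. ?\<Delta> i x" ?Dtr] etr_max(2) T(1) by auto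
    also have "\<dots> \<le> real l * ?Dtr" using T(2) \<open>0 \<le> ?Dtr\<close> by (intro mult_right_mono) auto
    finally show "(\<Sum>i\<in>{1..m}. f i (A i) + (\<Sum>x\<in>T. ?\<Delta> i x) + real (k - l) * ?\<Delta> i (e i))
                  \<le> (\<Sum>i\<in>{1..m}. f i (A i)) + real l * ?Dtr
                     + real (k - l) * (\<Sum>i\<in>{1..m}. ?\<Delta> i (e i))"
      unfolding sum.distrib sum_distrib_left sum.swap[of _ T] by simp
  qed
qed

lemma expectation_meta_greedy_round:
  assumes "0 \<le> p" "p \<le> 1"
  shows "measure_pmf.expectation (bernoulli_pmf p)
           (\<lambda>coin. let (Str', S') = meta_greedy_round Str S etr e coin in
              \<Sum>i\<in>I. f i (Str' \<union> S' i) - f i (Str \<union> S i))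
         = p * (\<Sum>i\<in>I. f i (Str \<union> S i \<union> {etr}) - f i (Str \<union> S i))
           + (1 - p) * (\<Sum>i\<in>I. f i (Str \<union> S i \<union> {e i}) - f i (Str \<union> S i))"
proof -
  have "insert etr Str \<union> S i = Str \<union> S i \<union> {etr}" "Str \<union> insert (e i) (S i) = Str \<union> S i \<union> {e i}"
    for i by auto
  then show ?thesis using assms by (simp add: meta_greedy_round_def mult.commute)
qed

text \<open>The hypotheses on nonnegativity, on \<open>k \<le> card V\<close> and on the cardinalities of the current
  sets only guarantee that the round is executed; the inequality holds without them.\<close>

theorem mainTheorem9:
  fixes V :: "'a set" and l k m :: nat and f :: "nat \<Rightarrow> 'a set \<Rightarrow> real"
    and Str :: "'a set" and S :: "nat \<Rightarrow> 'a set" and etr :: 'a and e :: "nat \<Rightarrow> 'a"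
  assumes finV: "finite V"
    and lk: "1 \<le> l" "l < k" "k \<le> card V"
    and nonneg: "\<And>i A. i \<in> {1..m} \<Longrightarrow> A \<subseteq> V \<Longrightarrow> f i A \<ge> 0"
    and mono: "\<And>i. i \<in> {1..m} \<Longrightarrow> monotone_set_fun V (f i)"
    and submod: "\<And>i. i \<in> {1..m} \<Longrightarrow> submodular_set_fun V (f i)"
    and Str: "Str \<subseteq> V" "card Str < l"
    and S: "\<And>i. i \<in> {1..m} \<Longrightarrow> S i \<subseteq> V" "\<And>i. i \<in> {1..m} \<Longrightarrow> card (S i) < k - l"
    and e_max: "\<And>i. i \<in> {1..m} \<Longrightarrow> e i \<in> V"
      "\<And>i x. i \<in> {1..m} \<Longrightarrow> x \<in> V \<Longrightarrow>
         f i (Str \<union> S i \<union> {x}) - f i (Str \<union> S i) \<le> f i (Str \<union> S i \<union> {e i}) - f i (Str \<union> S i)"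
    and etr_max: "etr \<in> V"
      "\<And>x. x \<in> V \<Longrightarrow>
         (\<Sum>i\<in>{1..m}. f i (Str \<union> S i \<union> {x}) - f i (Str \<union> S i))
           \<le> (\<Sum>i\<in>{1..m}. f i (Str \<union> S i \<union> {etr}) - f i (Str \<union> S i))"
  shows "measure_pmf.expectation (bernoulli_pmf (real l / real k))
           (\<lambda>coin. let (Str', S') = meta_greedy_round Str S etr e coin in
              \<Sum>i\<in>{1..m}. f i (Str' \<union> S' i) - f i (Str \<union> S i))
         \<ge> (1 / real k) * (OPT V l k m f - (\<Sum>i\<in>{1..m}. f i (Str \<union> S i)))"
proof -
  define F where "F = (\<Sum>i\<in>{1..m}. f i (Str \<union> S i))"
  define Dtr where "Dtr = (\<Sum>i\<in>{1..m}. f i (Str \<union> S i \<union> {etr}) - f i (Str \<union> S i))"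
  define D where "D = (\<Sum>i\<in>{1..m}. f i (Str \<union> S i \<union> {e i}) - f i (Str \<union> S i))"
  have "OPT V l k m f \<le> F + real l * Dtr + real (k - l) * D"
    unfolding F_def Dtr_def D_def using Str(1) S(1)
    by (intro OPT_le_marginal_gains[OF finV mono submod _ e_max etr_max]) auto
  then have "(1 / real k) * (OPT V l k m f - F) \<le> (1 / real k) * (real l * Dtr + real (k - l) * D)"
    by (intro mult_left_mono) auto
  also have "\<dots> = real l / real k * Dtr + (1 - real l / real k) * D"
    using lk by (simp add: of_nat_diff field_simps)
  also have "\<dots> = measure_pmf.expectation (bernoulli_pmf (real l / real k))
           (\<lambda>coin. let (Str', S') = meta_greedy_round Str S etr e coin in
              \<Sum>i\<in>{1..m}. f i (Str' \<union> S' i) - f i (Str \<union> S i))"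
    unfolding Dtr_def D_def using lk by (intro expectation_meta_greedy_round[symmetric]) auto
  finally show ?thesis unfolding F_def .
qed

end
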